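(* Let $(A,\preccurlyeq)$ be a partially ordered set and let $U_\preccurlyeq(A)\subseteq 2^A$ be the set of up-sets of $A$, with the topology induced by the natural (product) topology on $2^A$. Then for $x\in U_\preccurlyeq(A)$ the following are equivalent: (i) $x$ is an isolated point of $U_\preccurlyeq(A)$, i.e., $x$ is not in the closure of $U_\preccurlyeq(A)-\{x\}$; (ii) $x$ is both the union of a finite (possibly empty) family of principal up-sets and the intersection of a finite (possibly empty) family of complements of principal down-sets.
   Context: An up-set is a subset $x\subseteq A$ with $a\in x$, $a\preccurlyeq b$ implying $b\in x$. The principal up-set determined by $a$ is ${\uparrow}(a)=\{b\mid b\succcurlyeq a\}$, the principal down-set is ${\downarrow}(a)=\{b\mid b\preccurlyeq a\}$; complements are taken in $A$. The natural topology on $2^A$ (the set of subsets of $A$) is the product topology of copies of the discrete space $\{0,1\}$; a subbasis is given by the sets $\{x\mid a\in x\}$ and $\{x\mid a\notin x\}$ for $a\in A$. The empty intersection is $A$ and the empty union is $\emptyset$. *)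

theory Defs
  imports "HOL-Analysis.Analysis"
begin

definition up_sets :: "'a::order set \<Rightarrow> 'a set set" where
  "up_sets A = {x. x \<subseteq> A \<and> (\<forall>a\<in>x. \<forall>b\<in>A. a \<le> b \<longrightarrow> b \<in> x)}"

definition principal_up :: "'a::order set \<Rightarrow> 'a \<Rightarrow> 'a set" where
  "principal_up A a = {b\<in>A. a \<le> b}"

definition principal_down :: "'a::order set \<Rightarrow> 'a \<Rightarrow> 'a set" where
  "principal_down A a = {b\<in>A. b \<le> a}"

text \<open>Natural (product) topology on 2^A = Pow A, generated by the subbasis
  {x. a \<in> x}, {x. a \<notin> x} (a \<in> A); the whole space Pow A is added so that
  the topspace is Pow A also when A is empty.\<close>
definition nat_top :: "'a set \<Rightarrow> 'a set topology" where
  "nat_top A = topology_generated_by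
     (insert (Pow A) ((\<lambda>a. {x. x \<subseteq> A \<and> a \<in> x}) ` A \<union> (\<lambda>a. {x. x \<subseteq> A \<and> a \<notin> x}) ` A))"

end

theory Submission
  imports Defs
begin

text \<open>The basic open sets of \<open>2\<^sup>A\<close> are the cylinders \<open>{y. P \<subseteq> y, N \<inter> y = {}}\<close> with
  \<open>P\<close>, \<open>N\<close> finite, so \<open>x\<close> is isolated iff it is the only up-set in some cylinder. For an
  up-set \<open>y\<close>, \<open>P \<subseteq> y\<close> means \<open>\<Union>\<^sub>a\<^sub>\<in>\<^sub>P \<up>a \<subseteq> y\<close> and \<open>N \<inter> y = {}\<close> means \<open>y \<subseteq> \<Inter>\<^sub>a\<^sub>\<in>\<^sub>N (A - \<down>a)\<close>.
  Both bounds are up-sets lying in the cylinder, so \<open>x\<close> is the unique up-set there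
  exactly when it equals both of them.\<close>

definition cylinder :: "'a set \<Rightarrow> 'a set \<Rightarrow> 'a set \<Rightarrow> 'a set set" where
  "cylinder A P N = {y. y \<subseteq> A \<and> P \<subseteq> y \<and> N \<inter> y = {}}"

lemma cylinder_Un: "cylinder A (P \<union> P') (N \<union> N') = cylinder A P N \<inter> cylinder A P' N'"
  by (auto simp: cylinder_def)

lemma topspace_nat_top: "topspace (nat_top A) = Pow A"
  by (auto simp: nat_top_def)

lemma openin_nat_top_cylinder:
  assumes "finite P" "finite N" "P \<subseteq> A" "N \<subseteq> A"
  shows "openin (nat_top A) (cylinder A P N)"
proof -
  let ?S = "insert (Pow A) ((\<lambda>a. {x. x \<subseteq> A \<and> a \<in> x}) ` P \<union> (\<lambda>a. {x. x \<subseteq> A \<and> a \<notin> x}) ` N)"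
  have "cylinder A P N = \<Inter> ?S"
    by (auto simp: cylinder_def)
  moreover have "openin (nat_top A) (\<Inter> ?S)"
    using assms by (intro openin_Inter) (auto simp: nat_top_def intro!: topology_generated_by_Basis)
  ultimately show ?thesis
    by simp
qed

lemma nat_top_eq_generated_by_cylinders:
  "nat_top A = topology_generated_by
     (insert (cylinder A {} {}) ((\<lambda>a. cylinder A {a} {}) ` A \<union> (\<lambda>a. cylinder A {} {a}) ` A))"
  unfolding nat_top_def cylinder_def by (simp add: Pow_def)

lemma openin_nat_top_cylinder_nhd:
  assumes "openin (nat_top A) U" "x \<in> U"
  obtains P N where "finite P" "finite N" "P \<subseteq> A" "N \<subseteq> A" "x \<in> cylinder A P N"
    "cylinder A P N \<subseteq> U"
proof -
  have "generate_topology_on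
     (insert (cylinder A {} {}) ((\<lambda>a. cylinder A {a} {}) ` A \<union> (\<lambda>a. cylinder A {} {a}) ` A)) U"
    using assms(1) by (simp add: nat_top_eq_generated_by_cylinders openin_topology_generated_by_iff)
  then have "\<forall>x\<in>U. \<exists>P N. finite P \<and> finite N \<and> P \<subseteq> A \<and> N \<subseteq> A \<and> x \<in> cylinder A P N
               \<and> cylinder A P N \<subseteq> U"
  proof (induction rule: generate_topology_on.induct)
    case Empty
    show ?case by simp
  next
    case (Int U V)
    show ?case
    proof
      fix x assume "x \<in> U \<inter> V"
      then obtain P N P' N' where
        "finite P" "finite N" "P \<subseteq> A" "N \<subseteq> A" "x \<in> cylinder A P N" "cylinder A P N \<subseteq> U"
        "finite P'" "finite N'" "P' \<subseteq> A" "N' \<subseteq> A" "x \<in> cylinder A P' N'" "cylinder A P' N' \<subseteq> V"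
        using Int.IH by (meson IntD1 IntD2)
      then show "\<exists>P N. finite P \<and> finite N \<and> P \<subseteq> A \<and> N \<subseteq> A \<and> x \<in> cylinder A P N
               \<and> cylinder A P N \<subseteq> U \<inter> V"
        by (intro exI[of _ "P \<union> P'"] exI[of _ "N \<union> N'"]) (auto simp: cylinder_Un)
    qed
  next
    case (UN K)
    then show ?case
      by (meson UnionE Union_upper order_trans)
  next
    case (Basis S)
    then have "\<exists>P N. finite P \<and> finite N \<and> P \<subseteq> A \<and> N \<subseteq> A \<and> S = cylinder A P N"
      by (elim insertE UnE imageE) blast+
    then obtain P N where "finite P" "finite N" "P \<subseteq> A" "N \<subseteq> A" "S = cylinder A P N"
      by blast
    then show ?case
      by (intro ballI exI[of _ P] exI[of _ N]) simp
  qed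
  then have "\<exists>P N. finite P \<and> finite N \<and> P \<subseteq> A \<and> N \<subseteq> A \<and> x \<in> cylinder A P N
               \<and> cylinder A P N \<subseteq> U"
    using assms(2) by (rule bspec)
  then show ?thesis
    by (elim exE conjE) (rule that)
qed

lemma isolated_in_nat_top_iff_cylinder:
  assumes "x \<in> S" "S \<subseteq> Pow A"
  shows "x \<notin> (nat_top A) closure_of (S - {x}) \<longleftrightarrow>
         (\<exists>P N. finite P \<and> finite N \<and> P \<subseteq> A \<and> N \<subseteq> A \<and> S \<inter> cylinder A P N = {x})"
proof
  assume "x \<notin> (nat_top A) closure_of (S - {x})"
  moreover have "x \<in> topspace (nat_top A)"
    using assms by (auto simp: topspace_nat_top)
  ultimately obtain U where U: "openin (nat_top A) U" "x \<in> U" "U \<inter> (S - {x}) = {}"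
    unfolding in_closure_of by blast
  obtain P N where PN: "finite P" "finite N" "P \<subseteq> A" "N \<subseteq> A" "x \<in> cylinder A P N"
    "cylinder A P N \<subseteq> U"
    using U(1,2) by (rule openin_nat_top_cylinder_nhd)
  have "S \<inter> cylinder A P N = {x}"
    using U(3) PN(5,6) assms(1) by blast
  with PN(1-4) show "\<exists>P N. finite P \<and> finite N \<and> P \<subseteq> A \<and> N \<subseteq> A \<and> S \<inter> cylinder A P N = {x}"
    by blast
next
  assume "\<exists>P N. finite P \<and> finite N \<and> P \<subseteq> A \<and> N \<subseteq> A \<and> S \<inter> cylinder A P N = {x}"
  then obtain P N where PN: "finite P" "finite N" "P \<subseteq> A" "N \<subseteq> A" "S \<inter> cylinder A P N = {x}"
    by blast
  have "x \<in> cylinder A P N" "cylinder A P N \<inter> (S - {x}) = {}"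
    using PN(5) by blast+
  with openin_nat_top_cylinder[OF PN(1-4)] show "x \<notin> (nat_top A) closure_of (S - {x})"
    unfolding in_closure_of by blast
qed

lemma up_setsI: "x \<subseteq> A \<Longrightarrow> (\<And>a b. a \<in> x \<Longrightarrow> b \<in> A \<Longrightarrow> a \<le> b \<Longrightarrow> b \<in> x) \<Longrightarrow> x \<in> up_sets A"
  by (simp add: up_sets_def)

lemma up_setsD: "x \<in> up_sets A \<Longrightarrow> a \<in> x \<Longrightarrow> b \<in> A \<Longrightarrow> a \<le> b \<Longrightarrow> b \<in> x"
  by (simp add: up_sets_def)

lemma up_sets_subset: "x \<in> up_sets A \<Longrightarrow> x \<subseteq> A"
  by (simp add: up_sets_def)

lemma Union_principal_up_in_up_sets: "\<Union> (principal_up A ` P) \<in> up_sets A"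
proof (rule up_setsI)
  fix a b assume "a \<in> \<Union> (principal_up A ` P)" "b \<in> A" "a \<le> b"
  then obtain p where "p \<in> P" "p \<le> b"
    by (auto simp: principal_up_def intro: order_trans)
  with \<open>b \<in> A\<close> show "b \<in> \<Union> (principal_up A ` P)"
    unfolding principal_up_def by blast
qed (auto simp: principal_up_def)

lemma Inter_compl_principal_down_in_up_sets:
  "A \<inter> \<Inter> ((\<lambda>a. A - principal_down A a) ` N) \<in> up_sets A"
proof (rule up_setsI)
  fix a b assume a: "a \<in> A \<inter> \<Inter> ((\<lambda>a. A - principal_down A a) ` N)" and "b \<in> A" "a \<le> b"
  have "\<not> b \<le> n" if "n \<in> N" for n
  proof
    assume "b \<le> n"
    with \<open>a \<le> b\<close> have "a \<le> n"
      by (rule order_trans)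
    moreover have "a \<in> A - principal_down A n"
      using a that by blast
    ultimately show False
      by (simp add: principal_down_def)
  qed
  with \<open>b \<in> A\<close> show "b \<in> A \<inter> \<Inter> ((\<lambda>a. A - principal_down A a) ` N)"
    by (auto simp: principal_down_def)
qed auto

lemma up_set_supset_iff:
  assumes "y \<in> up_sets A" "P \<subseteq> A"
  shows "P \<subseteq> y \<longleftrightarrow> \<Union> (principal_up A ` P) \<subseteq> y"
proof
  assume "P \<subseteq> y"
  with assms show "\<Union> (principal_up A ` P) \<subseteq> y"
    by (auto simp: principal_up_def intro: up_setsD)
next
  assume "\<Union> (principal_up A ` P) \<subseteq> y"
  moreover have "P \<subseteq> \<Union> (principal_up A ` P)"
    using assms(2) by (auto simp: principal_up_def)
  ultimately show "P \<subseteq> y"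
    by (rule order_trans[rotated])
qed

lemma up_set_disjoint_iff:
  assumes "y \<in> up_sets A" "N \<subseteq> A"
  shows "N \<inter> y = {} \<longleftrightarrow> y \<subseteq> A \<inter> \<Inter> ((\<lambda>a. A - principal_down A a) ` N)"
proof
  assume "N \<inter> y = {}"
  have "\<not> b \<le> n" if "b \<in> y" "n \<in> N" for b n
    using up_setsD[OF assms(1) \<open>b \<in> y\<close>] that assms(2) \<open>N \<inter> y = {}\<close> by blast
  with up_sets_subset[OF assms(1)] show "y \<subseteq> A \<inter> \<Inter> ((\<lambda>a. A - principal_down A a) ` N)"
    by (auto simp: principal_down_def)
next
  assume bounded: "y \<subseteq> A \<inter> \<Inter> ((\<lambda>a. A - principal_down A a) ` N)"
  have "n \<notin> y" if "n \<in> N" for n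
  proof
    assume "n \<in> y"
    with bounded that have "n \<in> A - principal_down A n"
      by blast
    then show False
      by (simp add: principal_down_def)
  qed
  then show "N \<inter> y = {}"
    by blast
qed

lemma up_sets_Int_cylinder:
  assumes "P \<subseteq> A" "N \<subseteq> A"
  shows "up_sets A \<inter> cylinder A P N = {y \<in> up_sets A.
    \<Union> (principal_up A ` P) \<subseteq> y \<and> y \<subseteq> A \<inter> \<Inter> ((\<lambda>a. A - principal_down A a) ` N)}"
proof -
  have "y \<in> cylinder A P N \<longleftrightarrow>
      \<Union> (principal_up A ` P) \<subseteq> y \<and> y \<subseteq> A \<inter> \<Inter> ((\<lambda>a. A - principal_down A a) ` N)"
    if "y \<in> up_sets A" for y
    using that up_set_supset_iff[OF that assms(1)] up_set_disjoint_iff[OF that assms(2)]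
    by (simp add: cylinder_def up_sets_subset)
  then show ?thesis
    by blast
qed

lemma interval_eq_singleton_iff:
  fixes l r x :: "'b::order"
  assumes "l \<in> S" "r \<in> S"
  shows "{y \<in> S. l \<le> y \<and> y \<le> r} = {x} \<longleftrightarrow> x = l \<and> x = r"
proof
  assume interval: "{y \<in> S. l \<le> y \<and> y \<le> r} = {x}"
  then have "l \<le> x" "x \<le> r"
    by auto
  then have "l \<in> {y \<in> S. l \<le> y \<and> y \<le> r}" "r \<in> {y \<in> S. l \<le> y \<and> y \<le> r}"
    using assms by auto
  with interval show "x = l \<and> x = r"
    by auto
next
  assume "x = l \<and> x = r"
  with assms show "{y \<in> S. l \<le> y \<and> y \<le> r} = {x}"
    by (auto intro: order.antisym)
qed

theorem lemma5p1:
  fixes A :: "'a::order set" and x :: "'a set"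
  assumes "x \<in> up_sets A"
  shows "x \<notin> (nat_top A) closure_of (up_sets A - {x}) \<longleftrightarrow>
         ((\<exists>F. finite F \<and> F \<subseteq> A \<and> x = \<Union> (principal_up A ` F)) \<and>
          (\<exists>G. finite G \<and> G \<subseteq> A \<and> x = A \<inter> \<Inter> ((\<lambda>a. A - principal_down A a) ` G)))"
proof -
  have unique_iff: "up_sets A \<inter> cylinder A F G = {x} \<longleftrightarrow>
      x = \<Union> (principal_up A ` F) \<and> x = A \<inter> \<Inter> ((\<lambda>a. A - principal_down A a) ` G)"
    if "F \<subseteq> A" "G \<subseteq> A" for F G
    unfolding up_sets_Int_cylinder[OF that]
    by (intro interval_eq_singleton_iff Union_principal_up_in_up_sets
        Inter_compl_principal_down_in_up_sets)
  have "up_sets A \<subseteq> Pow A"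
    using up_sets_subset by blast
  then have "x \<notin> (nat_top A) closure_of (up_sets A - {x}) \<longleftrightarrow>
      (\<exists>F G. finite F \<and> finite G \<and> F \<subseteq> A \<and> G \<subseteq> A \<and> up_sets A \<inter> cylinder A F G = {x})"
    by (rule isolated_in_nat_top_iff_cylinder[OF assms])
  also have "\<dots> \<longleftrightarrow> (\<exists>F G. finite F \<and> finite G \<and> F \<subseteq> A \<and> G \<subseteq> A \<and>
      x = \<Union> (principal_up A ` F) \<and> x = A \<inter> \<Inter> ((\<lambda>a. A - principal_down A a) ` G))"
    by (simp add: unique_iff cong: conj_cong)
  finally show ?thesis
    by blast
qed

end
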